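(* Let $G=(V,E)$ be a complete hypergraph with $n:=|V|$, let $J\subseteq V$, and let $j\notin V$. Then: (i) replacing, in the expression $\ell_n(J,V\setminus J)$, each variable $z_p$ ($p\in\{\emptyset\}\cup V\cup E$, where $p\in V$ means the singleton $\{p\}$) by $z_{p\cup\{j\}}$ yields exactly $\ell_{n+1}(J\cup\{j\},V\setminus J)$; (ii) replacing each such $z_p$ by $z_p-z_{p\cup\{j\}}$ yields exactly $\ell_{n+1}(J,(V\cup\{j\})\setminus J)$. Consequently the inequality $\ell_n(J,V\setminus J)\ge0$ becomes $\ell_{n+1}(J\cup\{j\},V\setminus J)\ge0$ under (i), and $\ell_{n+1}(J,(V\cup\{j\})\setminus J)\ge0$ under (ii).
   Context: A hypergraph $G=(V,E)$ is complete if $E$ consists of all subsets of $V$ of cardinality at least two. Variables are indexed by subsets $S$ of $V\cup\{j\}$: $z_\emptyset:=1$, $z_{\{k\}}=z_k$, and $z_S$ for $|S|\ge2$. For disjoint $J_1,J_2$ with $|J_1\cup J_2|=d$, $\ell_d(J_1,J_2):=\sum_{t\subseteq J_2}(-1)^{|t|}z_{J_1\cup t}$. *)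

theory Defs
  imports Complex_Main
begin

text \<open>A linear expression in the variables z_S is represented as a function of the
  variable assignment z :: 'a set \<Rightarrow> real (z applied to the empty set plays the
  role of z_\<emptyset>). Substituting variables = precomposing the assignment.
  ell J1 J2 z is the value of l_d(J1,J2) with d = card (J1 \<union> J2).\<close>

definition ell :: "'a set \<Rightarrow> 'a set \<Rightarrow> ('a set \<Rightarrow> real) \<Rightarrow> real" where
  "ell J1 J2 z = (\<Sum>t\<in>Pow J2. (-1) ^ card t * z (J1 \<union> t))"

definition complete_hypergraph :: "'a set \<Rightarrow> 'a set set \<Rightarrow> bool" where
  "complete_hypergraph V E \<longleftrightarrow> finite V \<and> E = {S. S \<subseteq> V \<and> card S \<ge> 2}"

end

theory Submission
  imports Defs
begin

text \<open>Both identities are reindexings of the alternating sum defining \<open>ell\<close>.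
  Substituting \<open>z p \<mapsto> z (p \<union> {j})\<close> just moves \<open>j\<close> into the fixed part of every
  index set. For the second substitution, split the subsets of \<open>(V \<union> {j}) - J\<close>
  according to whether they contain \<open>j\<close>: adding \<open>j\<close> flips the sign \<open>(-1) ^ card t\<close>,
  which produces exactly the term \<open>- z (p \<union> {j})\<close>.\<close>

lemma sum_Pow_insert:
  fixes f :: "'a set \<Rightarrow> 'b::comm_monoid_add"
  assumes "finite A" "a \<notin> A"
  shows "(\<Sum>t\<in>Pow (insert a A). f t) = (\<Sum>t\<in>Pow A. f t + f (insert a t))"
proof -
  have "inj_on (insert a) (Pow A)"
    using assms(2) by (auto simp: inj_on_def insert_ident)
  moreover have "Pow A \<inter> insert a ` Pow A = {}"
    using assms(2) by auto
  ultimately show ?thesis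
    unfolding Pow_insert sum.distrib
    using assms(1) by (simp add: sum.union_disjoint sum.reindex)
qed

lemma ell_shift_assignment:
  "ell J A (\<lambda>p. z (p \<union> K)) = ell (J \<union> K) A z"
  unfolding ell_def by (simp add: Un_ac)

lemma ell_insert:
  assumes "finite A" "j \<notin> A" "j \<notin> J"
  shows "ell J (insert j A) z = ell J A (\<lambda>p. z p - z (p \<union> {j}))"
proof -
  have "(-1) ^ card (insert j t) * z (J \<union> insert j t) = - ((-1) ^ card t * z (J \<union> t \<union> {j}))"
    if "t \<in> Pow A" for t
  proof -
    from that assms(1,2) have "finite t" "j \<notin> t"
      using finite_subset by auto
    then show ?thesis by simp
  qed
  then show ?thesis
    unfolding ell_def sum_Pow_insert[OF assms(1,2)]
    by (simp add: algebra_simps)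
qed

theorem lemma5:
  fixes V J :: "'a set" and E :: "'a set set" and j :: 'a
  assumes "complete_hypergraph V E" and "J \<subseteq> V" and "j \<notin> V"
  shows "(\<forall>z :: 'a set \<Rightarrow> real.
            ell J (V - J) (\<lambda>p. z (p \<union> {j})) = ell (J \<union> {j}) (V - J) z
          \<and> ell J (V - J) (\<lambda>p. z p - z (p \<union> {j})) = ell J ((V \<union> {j}) - J) z
          \<and> (ell J (V - J) (\<lambda>p. z (p \<union> {j})) \<ge> 0 \<longleftrightarrow> ell (J \<union> {j}) (V - J) z \<ge> 0)
          \<and> (ell J (V - J) (\<lambda>p. z p - z (p \<union> {j})) \<ge> 0 \<longleftrightarrow> ell J ((V \<union> {j}) - J) z \<ge> 0))"
proof -
  have "finite (V - J)"
    using assms(1) by (simp add: complete_hypergraph_def)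
  moreover have "(V \<union> {j}) - J = insert j (V - J)" and "j \<notin> J"
    using assms(2,3) by auto
  ultimately have "ell J ((V \<union> {j}) - J) z = ell J (V - J) (\<lambda>p. z p - z (p \<union> {j}))" for z
    using assms(3) by (simp add: ell_insert)
  moreover have "ell J (V - J) (\<lambda>p. z (p \<union> {j})) = ell (J \<union> {j}) (V - J) z" for z
    by (rule ell_shift_assignment)
  ultimately show ?thesis
    by simp
qed

end
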